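(* Let $0<q<1$, let $m\in\{0,1,2,\dots\}$ and let $\lambda\in\left]0,\,q^m(1-q)^{-1}\right[$. Let $X\sim\mathscr{P}(\lambda;q,m)$ be the discrete random variable with $\Pr(X=j)=p_j(\lambda;q,m)$, $j=0,1,2,\dots$, as defined in the context. Then for every real $t$ with $|t|\le 1$, the probability generating function $\mathcal{G}_X(t):=\mathbb{E}(t^X)=\sum_{j\ge0}t^j p_j(\lambda;q,m)$ is given by \[ \mathcal{G}_{X}(t)=\frac{t^m\,(q^{-m}(1-q)\lambda;q)_\infty}{(q^{-m}t\lambda(1-q);q)_\infty}\;{}_3\phi_2\left(\begin{matrix}q^{-m},\,q/t,\,t\\ q^{1-m}(1-q)\lambda,\,q\end{matrix}\Big|\,q;\, q\lambda(1-q)\right), \] where the ${}_3\phi_2$ series terminates (it has at most $m+1$ nonzero terms).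
   Context: Throughout $0<q<1$. For $a\in\mathbb{C}$: $(a;q)_0=1$, $(a;q)_n=\prod_{k=0}^{n-1}(1-aq^k)$ for $n\ge1$, $(a;q)_\infty=\prod_{k\ge0}(1-aq^k)$, and $(a_1,\dots,a_l;q)_n=\prod_{i=1}^l(a_i;q)_n$. The $q$-number is $[a]_q=(1-q^a)/(1-q)$. The basic hypergeometric series is ${}_{s+1}\phi_s\left(\begin{matrix}a_1,\dots,a_{s+1}\\ b_1,\dots,b_s\end{matrix}\Big|q;\xi\right)=\sum_{k\ge0}\frac{(a_1,\dots,a_{s+1};q)_k}{(b_1,\dots,b_s;q)_k}\frac{\xi^k}{(q;q)_k}$. The Wall (little $q$-Laguerre) polynomial is $P_n(x;a|q)={}_2\phi_1\left(\begin{matrix}q^{-n},0\\ aq\end{matrix}\Big|q;qx\right)=\sum_{k=0}^n\frac{(q^{-n};q)_k}{(aq;q)_k}\frac{(qx)^k}{(q;q)_k}$. Write $m\wedge j=\min(m,j)$, $m\vee j=\max(m,j)$, $\binom{n}{2}=n(n-1)/2$. For $0<\lambda<q^m/(1-q)$ set $\mathcal{N}_{q,m}(\lambda)=\frac{(q^{1-m}(1-q)\lambda;q)_m}{q^m\,(q^{-m}(1-q)\lambda;q)_\infty}$ and \[ p_j(\lambda;q,m)=\frac{q^{2\binom{m\wedge j}{2}}(1-q)^{|m-j|}\lambda^{|m-j|}}{\mathcal{N}_{q,m}(\lambda)\,q^{mj}(q;q)_j(q;q)_m}\left(\frac{(q;q)_{m\vee j}}{(q;q)_{|m-j|}}P_{m\wedge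 j}\big((1-q)\lambda;q^{|m-j|}\,|\,q\big)\right)^2,\quad j=0,1,2,\dots \] These are the probabilities $|\langle\Psi^q_{z,m},\phi^q_j\rangle|^2$ ($\lambda=z\bar z$) of a generalized $q$-deformed coherent state in a $q$-number-state basis; the distribution is called the generalized Euler distribution $\mathscr{P}(\lambda;q,m)$ of index $m$. *)

theory Defs
  imports "HOL-Analysis.Analysis"
begin

definition qpoch :: "real \<Rightarrow> real \<Rightarrow> nat \<Rightarrow> real" where
  "qpoch a q n = (\<Prod>k<n. (1 - a * q ^ k))"

definition qpoch_inf :: "real \<Rightarrow> real \<Rightarrow> real" where
  "qpoch_inf a q = (\<Prod>k. (1 - a * q ^ k))"

definition basic_hyper :: "real list \<Rightarrow> real list \<Rightarrow> real \<Rightarrow> real \<Rightarrow> real" where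
  "basic_hyper as bs q xi =
     (\<Sum>k. (\<Prod>a\<leftarrow>as. qpoch a q k) / (\<Prod>b\<leftarrow>bs. qpoch b q k) * xi ^ k / qpoch q q k)"

definition wall :: "nat \<Rightarrow> real \<Rightarrow> real \<Rightarrow> real \<Rightarrow> real" where
  "wall n x a q = (\<Sum>k\<le>n. qpoch (1 / q ^ n) q k / qpoch (a * q) q k * (q * x) ^ k / qpoch q q k)"

definition gen_euler_N :: "real \<Rightarrow> nat \<Rightarrow> real \<Rightarrow> real" where
  "gen_euler_N q m lam =
     qpoch (q * (1 - q) * lam / q ^ m) q m / (q ^ m * qpoch_inf ((1 - q) * lam / q ^ m) q)"

definition gen_euler_p :: "real \<Rightarrow> real \<Rightarrow> nat \<Rightarrow> nat \<Rightarrow> real" where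
  "gen_euler_p lam q m j =
     (let d = max m j - min m j; n = min m j in
      q ^ (2 * (n choose 2)) * (1 - q) ^ d * lam ^ d
      / (gen_euler_N q m lam * q ^ (m * j) * qpoch q q j * qpoch q q m)
      * (qpoch q q (max m j) / qpoch q q d * wall n ((1 - q) * lam) (q ^ d) q) ^ 2)"

end

theory Submission
  imports Defs
begin

(* With x = (1-q) lam, a = x / q^m and y = t a, the Wall-polynomial factor of p_j is, up to sign
   and a power of x, A_j = amplitude m x j = sum_(i<=m) (-1)^i q^(i choose 2) x^(-i) [m,i]_q
   (q;q)_j / (q;q)_(j-i), one expression for both j <= m and j >= m; so t^j p_j is a constant
   times y^j A_j^2 / (q;q)_j.  Expanding one factor A_j, shifting the summation index and splitting
   (q;q)_(i+j) / (q;q)_(i+j-l) by the q-Vandermonde formula leaves finitely many instances of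
   Euler's identity sum_j y^j / (q;q)_j = 1 / (y;q)_inf.  The pgf is therefore a polynomial in y
   divided by (y;q)_inf, and the q-binomial theorem together with a q-Chu-Vandermonde type sum
   turns that polynomial into the terminating 3phi2. *)

lemma sum_atMost_triangle:
  "(\<Sum>k\<le>(n::nat). \<Sum>j\<le>n-k. f k j) = (\<Sum>l\<le>n. \<Sum>k\<le>l. f k (l-k))"
proof -
  have "(\<Sum>k\<le>n. \<Sum>j\<le>n-k. f k j) = (\<Sum>(i,j)\<in>{(i,j). i+j \<le> n}. f i j)"
    by (simp add: pairs_le_eq_Sigma sum.Sigma)
  also have "\<dots> = (\<Sum>l\<le>n. \<Sum>k\<le>l. f k (l-k))" by (rule sum.triangle_reindex_eq)
  finally show ?thesis .
qed

lemma sum_atMost_reflect: "(\<Sum>k\<le>(n::nat). f k) = (\<Sum>k\<le>n. f (n - k))"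
  using sum.atLeastAtMost_rev[of f 0 n] by (simp add: atMost_atLeast0)

lemma sum_atMost_shift_zeros:
  fixes r m :: nat
  assumes "\<And>i. i < r \<Longrightarrow> f i = 0" "r \<le> m"
  shows "(\<Sum>i\<le>m. f i) = (\<Sum>k\<le>m-r. f (r+k))"
proof -
  have "{..m} = {..<r} \<union> {r..m}" using assms(2) by auto
  then have "(\<Sum>i\<le>m. f i) = (\<Sum>i<r. f i) + (\<Sum>i\<in>{r..m}. f i)"
    by (simp add: sum.union_disjoint ivl_disj_int)
  also have "(\<Sum>i<r. f i) = 0" using assms(1) by simp
  also have "(\<Sum>i\<in>{r..m}. f i) = (\<Sum>k\<in>{0..m-r}. f (k + r))"
    using sum.shift_bounds_cl_nat_ivl[of f 0 r "m-r"] assms(2) by simp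
  finally show ?thesis by (simp add: atMost_atLeast0 add.commute)
qed

lemma choose2_Suc: "Suc n choose 2 = (n choose 2) + n"
  by (simp add: numeral_2_eq_2)

lemma choose2_add: "(a + b) choose 2 = (a choose 2) + (b choose 2) + a * b"
  by (induction b) (simp_all add: choose2_Suc)

lemma choose2_double_add: "2 * (n choose 2) + n = n * n"
  by (induction n) (simp_all add: choose2_Suc algebra_simps)

lemma qpoch_0 [simp]: "qpoch a q 0 = 1"
  by (simp add: qpoch_def)

lemma qpoch_Suc: "qpoch a q (Suc n) = qpoch a q n * (1 - a * q^n)"
  by (simp add: qpoch_def)

lemma qpoch_add: "qpoch a q (j + k) = qpoch a q j * qpoch (a * q^j) q k"
  by (induction k) (simp_all add: qpoch_Suc power_add algebra_simps)

lemma qpoch_Suc_left: "qpoch a q (Suc n) = (1 - a) * qpoch (a * q) q n"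
  using qpoch_add[of a q 1 n] by (simp add: qpoch_def)

lemma qpoch_pos:
  assumes "\<bar>z\<bar> < 1" "0 \<le> q" "q \<le> 1"
  shows "qpoch z q n > 0"
  unfolding qpoch_def
proof (rule prod_pos)
  fix k assume "k \<in> {..<n}"
  have "\<bar>z * q^k\<bar> \<le> \<bar>z\<bar>" using assms
    by (simp add: abs_mult power_le_one mult_left_le)
  then show "0 < 1 - z * q^k" using assms by linarith
qed

definition qbinom :: "real \<Rightarrow> nat \<Rightarrow> nat \<Rightarrow> real" where
  "qbinom q n k = (if k \<le> n then qpoch q q n / (qpoch q q k * qpoch q q (n - k)) else 0)"

text \<open>For \<open>l \<le> n\<close> this is \<open>(q;q)_n / (q;q)_(n-l)\<close>; for \<open>l > n\<close> the factor \<open>r = n\<close>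
  vanishes, so \<open>qfalling q n l = 0\<close>.\<close>
definition qfalling :: "real \<Rightarrow> nat \<Rightarrow> nat \<Rightarrow> real" where
  "qfalling q n l = (\<Prod>r<l. 1 - q^(n - r))"

lemma qfalling_0 [simp]: "qfalling q n 0 = 1"
  by (simp add: qfalling_def)

lemma qfalling_Suc: "qfalling q n (Suc l) = qfalling q n l * (1 - q^(n - l))"
  by (simp add: qfalling_def)

lemma qfalling_eq_0: "n < l \<Longrightarrow> qfalling q n l = 0"
  unfolding qfalling_def by (rule prod_zero) (auto intro!: bexI[of _ n])

lemma qfalling_mult_qpoch: "l \<le> n \<Longrightarrow> qfalling q n l * qpoch q q (n - l) = qpoch q q n"
proof (induction l)
  case (Suc l)
  then have "n - l = Suc (n - Suc l)" by simp
  then have "qpoch q q (n - l) = qpoch q q (n - Suc l) * (1 - q^(n - l))"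
    by (simp add: qpoch_Suc)
  then have "qfalling q n (Suc l) * qpoch q q (n - Suc l) = qfalling q n l * qpoch q q (n - l)"
    by (simp add: qfalling_Suc)
  then show ?case using Suc by simp
qed simp

lemma qbinom_eq_0: "n < k \<Longrightarrow> qbinom q n k = 0"
  by (simp add: qbinom_def)

lemma qbinom_symmetric: "k \<le> n \<Longrightarrow> qbinom q n (n - k) = qbinom q n k"
  unfolding qbinom_def by (simp add: mult.commute)

context
  fixes q :: real
  assumes q_pos: "0 < q" and q_less_1: "q < 1"
begin

lemma qpoch_q_pos: "qpoch q q n > 0"
  by (rule qpoch_pos) (use q_pos q_less_1 in auto)

lemma qpoch_q_nonzero: "qpoch q q n \<noteq> 0"
  using qpoch_q_pos by (metis less_irrefl)

lemma qbinom_0 [simp]: "qbinom q n 0 = 1"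
  by (simp add: qbinom_def qpoch_q_nonzero)

lemma qfalling_eq_qbinom: "qfalling q n l = qpoch q q l * qbinom q n l"
proof (cases "l \<le> n")
  case True
  then show ?thesis
    using qfalling_mult_qpoch[OF True, of q] qpoch_q_nonzero[of "n-l"] qpoch_q_nonzero[of l]
    by (simp add: qbinom_def field_simps)
qed (simp add: qfalling_eq_0 qbinom_def)

lemma qbinom_mult_qbinom:
  assumes "k \<le> M" "M \<le> m"
  shows "qbinom q m k * qbinom q (m-k) (M-k) = qbinom q m M * qbinom q M k"
proof -
  have "m - k - (M - k) = m - M" using assms by simp
  then show ?thesis using assms qpoch_q_nonzero unfolding qbinom_def by (simp add: field_simps)
qed

lemma qbinom_mult_qfalling:
  assumes "r \<le> i"
  shows "qbinom q m i * qfalling q i r = qfalling q m r * qbinom q (m-r) (i-r)"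
proof (cases "i \<le> m")
  case True
  have "qfalling q i r = qpoch q q i / qpoch q q (i-r)"
       "qfalling q m r = qpoch q q m / qpoch q q (m-r)"
    using qfalling_mult_qpoch[of r i q] qfalling_mult_qpoch[of r m q] assms True qpoch_q_nonzero
    by (simp_all add: field_simps)
  moreover have "m - r - (i - r) = m - i" using assms True by simp
  ultimately show ?thesis using assms True qpoch_q_nonzero unfolding qbinom_def
    by (simp add: field_simps)
qed (use assms in \<open>auto simp: qbinom_def qfalling_eq_0\<close>)

lemma qbinom_Suc_Suc: "qbinom q (Suc n) (Suc k) = q^(n-k) * qbinom q n k + qbinom q n (Suc k)"
proof (cases "k < n")
  case True
  define A where "A = qpoch q q k"
  define B where "B = qpoch q q (n - Suc k)"
  define C where "C = qpoch q q n"
  define u where "u = q^(Suc k)"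
  define v where "v = q^(n-k)"
  have "n - k = Suc (n - Suc k)" using True by simp
  moreover have "q^(Suc n) = u * v"
    using True by (simp add: u_def v_def flip: power_add)
  ultimately have qbinoms: "qbinom q n k = C / (A * (B * (1 - v)))"
      "qbinom q n (Suc k) = C / (A * (1 - u) * B)"
      "qbinom q (Suc n) (Suc k) = C * (1 - u * v) / (A * (1 - u) * (B * (1 - v)))"
    using True by (simp_all add: qbinom_def qpoch_Suc A_def B_def C_def u_def v_def)
  moreover have "u < 1" "v < 1"
    using q_pos q_less_1 True unfolding u_def v_def
    by (simp_all only: power_Suc_less_one power_less_one_iff) simp_all
  moreover have "A \<noteq> 0" "B \<noteq> 0"
    using qpoch_q_nonzero by (simp_all add: A_def B_def)
  ultimately show ?thesis
    unfolding qbinoms v_def[symmetric] by (simp add: divide_simps) (simp add: algebra_simps)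
qed (auto simp: qbinom_def qpoch_q_nonzero)

lemma sum_qbinom_Suc:
  "(\<Sum>j\<le>Suc n. qbinom q (Suc n) j * f j) = (\<Sum>j\<le>n. qbinom q n j * (q^(n-j) * f (Suc j) + f j))"
proof -
  have "(\<Sum>j\<le>Suc n. qbinom q (Suc n) j * f j)
      = f 0 + (\<Sum>j\<le>n. qbinom q (Suc n) (Suc j) * f (Suc j))"
    by (simp only: sum.atMost_Suc_shift) simp
  also have "\<dots> = (\<Sum>j\<le>n. q^(n-j) * qbinom q n j * f (Suc j))
                  + (f 0 + (\<Sum>j\<le>n. qbinom q n (Suc j) * f (Suc j)))"
    by (simp add: qbinom_Suc_Suc algebra_simps sum.distrib)
  also have "f 0 + (\<Sum>j\<le>n. qbinom q n (Suc j) * f (Suc j)) = (\<Sum>j\<le>Suc n. qbinom q n j * f j)"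
    by (simp only: sum.atMost_Suc_shift) simp
  also have "\<dots> = (\<Sum>j\<le>n. qbinom q n j * f j)"
    by (simp add: qbinom_eq_0)
  finally show ?thesis by (simp add: algebra_simps sum.distrib)
qed

lemma q_vandermonde:
  "qpoch (a * b) q n = (\<Sum>j\<le>n. qbinom q n j * (b^j * qpoch a q j * qpoch b q (n-j)))"
proof (induction n)
  case (Suc n)
  have "(\<Sum>j\<le>Suc n. qbinom q (Suc n) j * (b^j * qpoch a q j * qpoch b q (Suc n - j)))
      = (\<Sum>j\<le>n. qbinom q n j * (q^(n-j) * (b^(Suc j) * qpoch a q (Suc j) * qpoch b q (Suc n - Suc j))
           + b^j * qpoch a q j * qpoch b q (Suc n - j)))"
    by (rule sum_qbinom_Suc)
  also have "\<dots> = (\<Sum>j\<le>n. qbinom q n j * ((1 - a*b*q^n) * (b^j * qpoch a q j * qpoch b q (n-j))))"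
  proof (rule sum.cong[OF refl])
    fix j assume "j \<in> {..n}"
    then have "Suc n - j = Suc (n - j)" "q^n = q^(n-j) * q^j" by (simp_all flip: power_add)
    then show "qbinom q n j * (q^(n-j) * (b^(Suc j) * qpoch a q (Suc j) * qpoch b q (Suc n - Suc j))
           + b^j * qpoch a q j * qpoch b q (Suc n - j))
        = qbinom q n j * ((1 - a*b*q^n) * (b^j * qpoch a q j * qpoch b q (n-j)))"
      by (simp add: qpoch_Suc algebra_simps)
  qed
  also have "\<dots> = (1 - a*b*q^n) * qpoch (a*b) q n"
    by (simp add: Suc.IH sum_distrib_left algebra_simps)
  finally show ?case by (simp add: qpoch_Suc algebra_simps)
qed simp

lemma q_binomial:
  "qpoch z q n = (\<Sum>k\<le>n. qbinom q n k * ((-1)^k * q^(k choose 2) * z^k))"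
proof (induction n)
  case (Suc n)
  have "(\<Sum>k\<le>Suc n. qbinom q (Suc n) k * ((-1)^k * q^(k choose 2) * z^k))
      = (\<Sum>j\<le>n. qbinom q n j * (q^(n-j) * ((-1)^(Suc j) * q^(Suc j choose 2) * z^(Suc j))
           + (-1)^j * q^(j choose 2) * z^j))"
    by (rule sum_qbinom_Suc)
  also have "\<dots> = (\<Sum>j\<le>n. qbinom q n j * ((1 - z*q^n) * ((-1)^j * q^(j choose 2) * z^j)))"
  proof (rule sum.cong[OF refl])
    fix j assume "j \<in> {..n}"
    then have "q^n = q^(n-j) * q^j" by (simp flip: power_add)
    then show "qbinom q n j * (q^(n-j) * ((-1)^(Suc j) * q^(Suc j choose 2) * z^(Suc j))
           + (-1)^j * q^(j choose 2) * z^j)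
        = qbinom q n j * ((1 - z*q^n) * ((-1)^j * q^(j choose 2) * z^j))"
      by (simp add: choose2_Suc power_add algebra_simps)
  qed
  also have "\<dots> = (1 - z*q^n) * qpoch z q n"
    by (simp add: Suc.IH sum_distrib_left algebra_simps)
  finally show ?case by (simp add: qpoch_Suc algebra_simps)
qed (simp add: numeral_2_eq_2)

lemma sum_qbinom_power_qpoch: "(\<Sum>k\<le>l. qbinom q l k * (u^(l-k) * qpoch u q k)) = 1"
proof (induction l arbitrary: u)
  case (Suc l)
  have "(\<Sum>k\<le>Suc l. qbinom q (Suc l) k * (u^(Suc l-k) * qpoch u q k))
      = (\<Sum>j\<le>l. qbinom q l j
          * (q^(l-j) * (u^(Suc l - Suc j) * qpoch u q (Suc j)) + u^(Suc l - j) * qpoch u q j))"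
    by (rule sum_qbinom_Suc)
  also have "\<dots> = (\<Sum>j\<le>l. (1-u) * (qbinom q l j * ((u*q)^(l-j) * qpoch (u*q) q j))
                          + u * (qbinom q l j * (u^(l-j) * qpoch u q j)))"
  proof (rule sum.cong[OF refl])
    fix j assume "j \<in> {..l}"
    then have "Suc l - j = Suc (l - j)" by simp
    then show "qbinom q l j
          * (q^(l-j) * (u^(Suc l - Suc j) * qpoch u q (Suc j)) + u^(Suc l - j) * qpoch u q j)
        = (1-u) * (qbinom q l j * ((u*q)^(l-j) * qpoch (u*q) q j))
          + u * (qbinom q l j * (u^(l-j) * qpoch u q j))"
      by (simp add: qpoch_Suc_left power_mult_distrib algebra_simps)
  qed
  also have "\<dots> = 1"
    by (simp add: sum.distrib flip: sum_distrib_left add: Suc.IH)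
  finally show ?case .
qed simp

lemma qpoch_inverse_power: "qpoch (1/q^n) q l = (-1)^l * q^(l choose 2) / q^(n*l) * qfalling q n l"
proof (induction l)
  case (Suc l)
  show ?case
  proof (cases "l \<le> n")
    case True
    have "q^n = q^l * q^(n-l)" using True by (simp flip: power_add)
    then have "1 - 1/q^n * q^l = - (q^l / q^n) * (1 - q^(n-l))"
      using q_pos by (simp add: field_simps)
    then show ?thesis
      unfolding qpoch_Suc Suc.IH qfalling_Suc using q_pos
      by (simp add: choose2_Suc power_add field_simps)
  qed (use Suc.IH in \<open>simp add: qpoch_Suc qfalling_Suc qfalling_eq_0\<close>)
qed (simp add: numeral_2_eq_2)

lemma qfalling_add:
  "qfalling q (i+j) l
     = (\<Sum>r\<le>l. qbinom q l r * (q^(i*(l-r)) / q^(r*(l-r))) * qfalling q i r * qfalling q j (l-r))"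
proof -
  define c where "c = (-1)^l * q^(l choose 2) / q^((i+j)*l)"
  have "c * qfalling q (i+j) l = qpoch ((1/q^i) * (1/q^j)) q l"
    using qpoch_inverse_power[of "i+j" l] by (simp add: c_def power_add)
  also have "\<dots> = (\<Sum>r\<le>l. qbinom q l r * ((1/q^j)^r * qpoch (1/q^i) q r * qpoch (1/q^j) q (l-r)))"
    by (rule q_vandermonde)
  also have "\<dots> = c * (\<Sum>r\<le>l. qbinom q l r * (q^(i*(l-r)) / q^(r*(l-r)))
                                * qfalling q i r * qfalling q j (l-r))"
    unfolding sum_distrib_left
  proof (rule sum.cong[OF refl])
    fix r assume "r \<in> {..l}"
    then obtain s where s: "l = r + s" using le_Suc_ex by auto
    have "(q^j)^r = q^(r*j)" by (simp add: mult.commute flip: power_mult)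
    then show "qbinom q l r * ((1/q^j)^r * qpoch (1/q^i) q r * qpoch (1/q^j) q (l-r))
      = c * (qbinom q l r * (q^(i*(l-r)) / q^(r*(l-r))) * qfalling q i r * qfalling q j (l-r))"
      unfolding s c_def using q_pos
      by (simp add: qpoch_inverse_power choose2_add power_add power_mult_distrib
          add_mult_distrib add_mult_distrib2 power_one_over field_simps)
  qed
  finally show ?thesis using q_pos by (simp add: c_def)
qed

lemma qpoch_divide_power:
  assumes "t \<noteq> 0"
  shows "qpoch (t/q^j) q j = (-t)^j / q^(Suc j choose 2) * qpoch (q/t) q j"
proof (induction j)
  case (Suc j)
  have shift: "t / q^(Suc j) * q = t / q^j" using q_pos by simp
  show ?case
    unfolding qpoch_Suc_left[of "t / q^(Suc j)"] shift Suc.IH qpoch_Suc[of "q/t"]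
    using assms q_pos by (simp add: choose2_Suc power_add field_simps)
qed (simp add: numeral_2_eq_2)

definition qexp :: "real \<Rightarrow> real" where
  "qexp w = (\<Sum>j. w^j / qpoch q q j)"

lemma summable_qexp:
  assumes "\<bar>w\<bar> < 1"
  shows "summable (\<lambda>j. w^j / qpoch q q j)"
proof -
  define d where "d = (1 - \<bar>w\<bar>) / 2"
  define c where "c = \<bar>w\<bar> / (1 - d)"
  have d: "d > 0" "1 - d > 0" using assms unfolding d_def by auto
  have c: "c < 1" "c \<ge> 0" using assms d unfolding c_def d_def by (simp_all add: field_simps)
  obtain N where N: "q^N < d" using real_arch_pow_inv[OF d(1) q_less_1] by blast
  show ?thesis
  proof (rule summable_ratio_test[OF c(1), of N])
    fix n assume "N \<le> n"
    then have "q^(Suc n) \<le> q^N" using q_pos q_less_1 by (intro power_decreasing) auto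
    then have "c * (1 - d) \<le> c * (1 - q^Suc n)" using N c(2) by (intro mult_left_mono) auto
    moreover have "c * (1 - d) = \<bar>w\<bar>" unfolding c_def using d by simp
    ultimately have "\<bar>w\<bar> * \<bar>w\<bar>^n \<le> c * (1 - q^Suc n) * \<bar>w\<bar>^n"
      by (intro mult_right_mono) auto
    moreover have "qpoch q q n > 0" "1 - q^Suc n > 0"
      using qpoch_q_pos q_pos q_less_1 power_Suc_less_one[of q n] by auto
    ultimately show "norm (w^(Suc n) / qpoch q q (Suc n)) \<le> c * norm (w^n / qpoch q q n)"
      by (simp add: qpoch_Suc abs_mult power_abs divide_le_eq) (simp add: algebra_simps)
  qed
qed

lemma abs_power_mult_less_1:
  assumes "\<bar>w\<bar> < 1"
  shows "\<bar>q^n * w\<bar> < 1"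
proof -
  have "q^n \<le> 1" "q^n \<ge> 0" using q_pos q_less_1 by (auto intro: power_le_one)
  then have "q^n * \<bar>w\<bar> \<le> \<bar>w\<bar>" by (simp add: mult_left_le_one_le)
  then show ?thesis using assms \<open>q^n \<ge> 0\<close> by (simp add: abs_mult)
qed

lemma qexp_mult_q:
  assumes "\<bar>w\<bar> < 1"
  shows "qexp (q * w) = (1 - w) * qexp w"
proof -
  define h where "h j = w^j / qpoch q q j" for j
  have "\<bar>q * w\<bar> < 1" using abs_power_mult_less_1[OF assms, of 1] by simp
  then have "(\<lambda>j. (q * w)^j / qpoch q q j) sums qexp (q * w)"
    unfolding qexp_def by (intro summable_sums summable_qexp)
  then have g: "(\<lambda>j. (q * w)^(Suc j) / qpoch q q (Suc j)) sums (qexp (q * w) - 1)"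
    using sums_Suc_iff[of "\<lambda>j. (q * w)^j / qpoch q q j"] by simp
  have h: "h sums qexp w" unfolding h_def qexp_def using summable_qexp[OF assms] by (rule summable_sums)
  then have "(\<lambda>j. h (Suc j)) sums (qexp w - 1)" using sums_Suc_iff[of h] by (simp add: h_def)
  then have d: "(\<lambda>j. h (Suc j) - w * h j) sums (qexp w - 1 - w * qexp w)"
    using h by (intro sums_diff sums_mult)
  have step: "h (Suc j) - w * h j = (q * w)^(Suc j) / qpoch q q (Suc j)" for j
  proof -
    have "qpoch q q j \<noteq> 0" "1 - q^Suc j \<noteq> 0"
      using qpoch_q_nonzero q_pos q_less_1 power_Suc_less_one[of q j] by auto
    then show ?thesis unfolding h_def by (simp add: qpoch_Suc field_simps power_mult_distrib)
  qed
  have "(\<lambda>j. (q * w)^(Suc j) / qpoch q q (Suc j)) sums (qexp w - 1 - w * qexp w)"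
    using d unfolding step .
  with g have "qexp (q * w) - 1 = qexp w - 1 - w * qexp w" by (rule sums_unique2)
  then show ?thesis by (simp add: algebra_simps)
qed

lemma qexp_mult_power:
  assumes "\<bar>w\<bar> < 1"
  shows "qexp (q^n * w) = qpoch w q n * qexp w"
proof (induction n)
  case (Suc n)
  have "qexp (q^Suc n * w) = qexp (q * (q^n * w))" by (simp add: algebra_simps)
  also have "\<dots> = (1 - q^n * w) * qexp (q^n * w)"
    by (rule qexp_mult_q[OF abs_power_mult_less_1[OF assms]])
  also have "\<dots> = (1 - q^n * w) * (qpoch w q n * qexp w)" by (simp only: Suc.IH)
  finally show ?case by (simp add: qpoch_Suc algebra_simps)
qed simp

lemma qexp_0: "qexp 0 = 1"
  unfolding qexp_def by (subst suminf_finite[of "{0}"]) auto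

lemma isCont_qexp_0: "isCont qexp 0"
proof -
  have "summable (\<lambda>n. (1 / qpoch q q n) * (1/2)^n)"
    using summable_qexp[of "1/2"] by simp
  then have "isCont (\<lambda>x. \<Sum>n. (1 / qpoch q q n) * x^n) 0"
    by (rule isCont_powser) simp
  moreover have "(\<lambda>x. \<Sum>n. (1 / qpoch q q n) * x^n) = qexp"
    unfolding qexp_def by (simp add: field_simps)
  ultimately show ?thesis by simp
qed

lemma qpoch_LIMSEQ:
  assumes "\<bar>w\<bar> < 1"
  shows "(\<lambda>n. qpoch w q n) \<longlonglongrightarrow> qpoch_inf w q"
proof -
  have "summable (\<lambda>i. norm ((1 - w * q^i) - 1))"
    using summable_mult[OF summable_geometric[of q], of "\<bar>w\<bar>"] q_pos q_less_1
    by (simp add: abs_mult power_abs)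
  then have "convergent_prod (\<lambda>i. 1 - w * q^i)"
    by (intro abs_convergent_prod_imp_convergent_prod summable_imp_abs_convergent_prod)
  then have "(\<lambda>n. \<Prod>i\<le>n. 1 - w * q^i) \<longlonglongrightarrow> qpoch_inf w q"
    unfolding qpoch_inf_def by (rule convergent_prod_LIMSEQ)
  then have "(\<lambda>n. qpoch w q (Suc n)) \<longlonglongrightarrow> qpoch_inf w q"
    by (simp add: qpoch_def lessThan_Suc_atMost)
  then show ?thesis by (rule LIMSEQ_imp_Suc)
qed

text \<open>Euler's identity: let \<open>n \<rightarrow> \<infinity>\<close> in \<open>qexp (q^n w) = (w;q)_n qexp w\<close>.\<close>
lemma qpoch_inf_mult_qexp:
  assumes "\<bar>w\<bar> < 1"
  shows "qpoch_inf w q * qexp w = 1"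
proof -
  have "(\<lambda>n. q^n * w) \<longlonglongrightarrow> 0"
    using q_pos q_less_1 by (intro tendsto_mult_left_zero LIMSEQ_power_zero) simp
  then have "(\<lambda>n. qexp (q^n * w)) \<longlonglongrightarrow> qexp 0"
    by (rule isCont_tendsto_compose[OF isCont_qexp_0])
  then have "(\<lambda>n. qpoch w q n * qexp w) \<longlonglongrightarrow> 1"
    by (simp add: qexp_mult_power[OF assms] qexp_0)
  moreover have "(\<lambda>n. qpoch w q n * qexp w) \<longlonglongrightarrow> qpoch_inf w q * qexp w"
    by (intro tendsto_intros qpoch_LIMSEQ[OF assms])
  ultimately show ?thesis using LIMSEQ_unique by blast
qed

lemma qpoch_inf_nonzero:
  assumes "\<bar>w\<bar> < 1"
  shows "qpoch_inf w q \<noteq> 0"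
  using qpoch_inf_mult_qexp[OF assms] by auto

lemma sums_qexp:
  assumes "\<bar>w\<bar> < 1"
  shows "(\<lambda>j. w^j / qpoch q q j) sums (1 / qpoch_inf w q)"
proof -
  have "qexp w = 1 / qpoch_inf w q"
    using qpoch_inf_mult_qexp[OF assms] qpoch_inf_nonzero[OF assms] by (simp add: field_simps)
  then show ?thesis
    using summable_qexp[OF assms] unfolding qexp_def by (metis summable_sums)
qed

lemma sums_qfalling_shift:
  assumes "(\<lambda>j. y^j * g j / qpoch q q j) sums s"
  shows "(\<lambda>j. y^j * qfalling q j i * g (j - i) / qpoch q q j) sums (y^i * s)"
proof -
  define f where "f j = y^j * qfalling q j i * g (j - i) / qpoch q q j" for j
  have "f (j + i) = y^i * (y^j * g j / qpoch q q j)" for j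
  proof -
    have "qfalling q (j+i) i * qpoch q q j = qpoch q q (j+i)"
      using qfalling_mult_qpoch[of i "j+i" q] by simp
    then show ?thesis unfolding f_def using qpoch_q_nonzero[of "j+i"] qpoch_q_nonzero[of j]
      by (simp add: field_simps power_add)
  qed
  then have "(\<lambda>j. f (j + i)) sums (y^i * s)" using sums_mult[OF assms] by simp
  moreover have "(\<Sum>j<i. f j) = 0" unfolding f_def by (simp add: qfalling_eq_0)
  ultimately show ?thesis using sums_iff_shift[of f i "y^i * s"] unfolding f_def by simp
qed

lemma sums_qfalling:
  assumes "\<bar>y\<bar> < 1"
  shows "(\<lambda>j. y^j * qfalling q j r / qpoch q q j) sums (y^r / qpoch_inf y q)"
proof -
  have "(\<lambda>j. y^j * 1 / qpoch q q j) sums (1 / qpoch_inf y q)"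
    using sums_qexp[OF assms] by simp
  from sums_qfalling_shift[OF this, of r] show ?thesis by simp
qed

definition amplitude_coeff :: "nat \<Rightarrow> real \<Rightarrow> nat \<Rightarrow> real" where
  "amplitude_coeff m x i = (-1)^i * q^(i choose 2) / x^i * qbinom q m i"

definition amplitude :: "nat \<Rightarrow> real \<Rightarrow> nat \<Rightarrow> real" where
  "amplitude m x j = (\<Sum>i\<le>m. amplitude_coeff m x i * qfalling q j i)"

lemma wall_eq_sum_qfalling:
  assumes "x \<noteq> 0"
  shows "qpoch q q (n+d) / qpoch q q d * wall n x (q^d) q
    = (-1)^n * x^n / q^(n choose 2)
      * (\<Sum>i\<le>n. (-1)^i * q^(i choose 2) / x^i * qbinom q n i * qfalling q (n+d) i)"
proof -
  define f where "f i = (-1)^n * x^n / q^(n choose 2)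
      * ((-1)^i * q^(i choose 2) / x^i * qbinom q n i * qfalling q (n+d) i)" for i
  have "qpoch q q (n+d) / qpoch q q d * wall n x (q^d) q
      = (\<Sum>k\<le>n. qpoch q q (n+d) / qpoch q q d
          * (qpoch (1 / q^n) q k / qpoch (q^d * q) q k * (q * x)^k / qpoch q q k))"
    unfolding wall_def by (simp add: sum_distrib_left)
  also have "\<dots> = (\<Sum>k\<le>n. f (n - k))"
  proof (rule sum.cong[OF refl])
    fix k assume "k \<in> {..n}"
    then obtain j where n: "n = k + j" using le_Suc_ex by auto
    then have e: "n - k = j" "n + d - j = d + k" by auto
    have shift: "qpoch (q^d * q) q k = qpoch q q (d+k) / qpoch q q d"
      using qpoch_add[of q q d k] qpoch_q_nonzero[of d] by (simp add: field_simps mult.commute)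
    have falling: "qfalling q (n+d) j = qpoch q q (n+d) / qpoch q q (d+k)"
      using qfalling_mult_qpoch[of j "n+d" q] qpoch_q_nonzero[of "d+k"] e n by (simp add: field_simps)
    have qbinom_sym: "qbinom q n j = qbinom q n k" using qbinom_symmetric[of k n q] n by simp
    have "(j choose 2) + n*k = (n choose 2) + (k choose 2) + k"
      using choose2_double_add[of k] unfolding n by (simp add: choose2_add algebra_simps)
    then have "q^(j choose 2) * q^(n*k) = q^(n choose 2) * q^(k choose 2) * q^k"
      by (simp flip: power_add)
    moreover have "(-1::real)^n * (-1)^j = (-1)^k" "x^n / x^j = x^k"
      using assms n by (simp_all add: power_add)
    ultimately show "qpoch q q (n+d) / qpoch q q d
        * (qpoch (1 / q^n) q k / qpoch (q^d * q) q k * (q * x)^k / qpoch q q k) = f (n - k)"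
      unfolding f_def e qpoch_inverse_power shift falling qbinom_sym qfalling_eq_qbinom[of n k]
      using qpoch_q_nonzero q_pos assms
      by (simp add: field_simps power_mult_distrib)
  qed
  also have "\<dots> = (\<Sum>i\<le>n. f i)" by (rule sum_atMost_reflect[symmetric])
  finally show ?thesis unfolding f_def by (simp add: sum_distrib_left)
qed

lemma sum_qbinom_qfalling_swap:
  assumes "j \<le> m"
  shows "(\<Sum>i\<le>j. g i * qbinom q j i * qfalling q m i)
       = (\<Sum>i\<le>m. g i * qbinom q m i * qfalling q j i)"
proof -
  have "(\<Sum>i\<le>j. g i * qbinom q j i * qfalling q m i)
      = (\<Sum>i\<le>j. g i * qbinom q m i * qfalling q j i)"
    by (rule sum.cong[OF refl]) (simp add: qfalling_eq_qbinom)
  also have "\<dots> = (\<Sum>i\<le>m. g i * qbinom q m i * qfalling q j i)"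
    by (rule sum.mono_neutral_left) (use assms in \<open>auto simp: qfalling_eq_0\<close>)
  finally show ?thesis .
qed

lemma wall_eq_amplitude:
  assumes "x \<noteq> 0"
  shows "qpoch q q (max m j) / qpoch q q (max m j - min m j)
           * wall (min m j) x (q^(max m j - min m j)) q
    = (-1)^(min m j) * x^(min m j) / q^(min m j choose 2) * amplitude m x j"
proof (cases "m \<le> j")
  case True
  then have "max m j = m + (j - m)" "max m j - min m j = j - m" "min m j = m" by auto
  then show ?thesis using wall_eq_sum_qfalling[OF assms, of m "j-m"] True
    by (simp add: amplitude_def amplitude_coeff_def sum_divide_distrib)
next
  case False
  then have "max m j = j + (m - j)" "max m j - min m j = m - j" "min m j = j" by auto
  moreover have "(\<Sum>i\<le>j. (-1)^i * q^(i choose 2) / x^i * qbinom q j i * qfalling q m i)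
      = (\<Sum>i\<le>m. (-1)^i * q^(i choose 2) / x^i * qbinom q m i * qfalling q j i)"
    using sum_qbinom_qfalling_swap[of j m "\<lambda>i. (-1)^i * q^(i choose 2) / x^i"] False by simp
  ultimately show ?thesis using wall_eq_sum_qfalling[OF assms, of j "m-j"] False
    by (simp add: amplitude_def amplitude_coeff_def)
qed

lemma gen_euler_p_eq_amplitude:
  assumes "x = (1-q) * lam" "x \<noteq> 0"
  shows "t^j * gen_euler_p lam q m j
    = x^m / (gen_euler_N q m lam * qpoch q q m) * ((t*x/q^m)^j * (amplitude m x j)^2 / qpoch q q j)"
proof -
  define n where "n = min m j"
  define d where "d = max m j - min m j"
  define N where "N = gen_euler_N q m lam * q^(m*j) * qpoch q q j * qpoch q q m"
  have W: "qpoch q q (max m j) / qpoch q q d * wall n ((1-q)*lam) (q^d) q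
      = (-1)^n * x^n / q^(n choose 2) * amplitude m x j"
    unfolding n_def d_def assms(1)[symmetric] by (rule wall_eq_amplitude[OF assms(2)])
  have "gen_euler_p lam q m j = q^(2 * (n choose 2)) * ((1-q)^d * lam^d) / N
      * (qpoch q q (max m j) / qpoch q q d * wall n ((1-q)*lam) (q^d) q)^2"
    unfolding gen_euler_p_def Let_def n_def d_def N_def by simp
  then have "t^j * gen_euler_p lam q m j
      = t^j * (q^(2 * (n choose 2)) * ((1-q)^d * lam^d) / N
        * ((-1)^n * x^n / q^(n choose 2) * amplitude m x j)^2)"
    unfolding W by simp
  also have "(1-q)^d * lam^d = x^d" unfolding assms(1) by (simp add: power_mult_distrib)
  also have "t^j * (q^(2 * (n choose 2)) * x^d / N
        * ((-1)^n * x^n / q^(n choose 2) * amplitude m x j)^2)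
      = t^j * x^(d + 2*n) / N * (amplitude m x j)^2"
    using q_pos by (simp add: power_add power_mult_distrib power_divide field_simps flip: power_mult)
  also have "d + 2*n = m + j" unfolding d_def n_def by auto
  also have "(q^j)^m = (q^m)^j" by (simp add: mult.commute flip: power_mult)
  then have "t^j * x^(m + j) / N * (amplitude m x j)^2
      = x^m / (gen_euler_N q m lam * qpoch q q m) * ((t*x/q^m)^j * (amplitude m x j)^2 / qpoch q q j)"
    unfolding N_def by (simp add: power_add power_mult power_divide power_mult_distrib field_simps)
  finally show ?thesis .
qed

definition amplitude_shift_numerator :: "nat \<Rightarrow> real \<Rightarrow> nat \<Rightarrow> real \<Rightarrow> real" where
  "amplitude_shift_numerator m x i y = (\<Sum>l\<le>m. amplitude_coeff m x l
      * (\<Sum>r\<le>l. qbinom q l r * (q^(i*(l-r)) / q^(r*(l-r))) * qfalling q i r * y^(l-r)))"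

definition pgf_numerator :: "nat \<Rightarrow> real \<Rightarrow> real \<Rightarrow> real" where
  "pgf_numerator m x y = (\<Sum>i\<le>m. amplitude_coeff m x i * y^i * amplitude_shift_numerator m x i y)"

lemma sums_amplitude_shift:
  assumes "\<bar>y\<bar> < 1"
  shows "(\<lambda>j. y^j * amplitude m x (i + j) / qpoch q q j) sums
     (amplitude_shift_numerator m x i y / qpoch_inf y q)"
proof -
  have "y^j * amplitude m x (i + j) / qpoch q q j =
      (\<Sum>l\<le>m. amplitude_coeff m x l * (\<Sum>r\<le>l. qbinom q l r * (q^(i*(l-r)) / q^(r*(l-r)))
          * qfalling q i r * (y^j * qfalling q j (l-r) / qpoch q q j)))" for j
    unfolding amplitude_def qfalling_add
    by (simp add: sum_distrib_left sum_distrib_right sum_divide_distrib algebra_simps)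
  moreover have "(\<lambda>j. (\<Sum>l\<le>m. amplitude_coeff m x l * (\<Sum>r\<le>l. qbinom q l r * (q^(i*(l-r)) / q^(r*(l-r)))
          * qfalling q i r * (y^j * qfalling q j (l-r) / qpoch q q j))))
      sums (\<Sum>l\<le>m. amplitude_coeff m x l * (\<Sum>r\<le>l. qbinom q l r * (q^(i*(l-r)) / q^(r*(l-r)))
          * qfalling q i r * (y^(l-r) / qpoch_inf y q)))"
    by (intro sums_sum sums_mult sums_qfalling[OF assms])
  ultimately show ?thesis unfolding amplitude_shift_numerator_def
    by (simp add: sum_distrib_left sum_distrib_right sum_divide_distrib algebra_simps)
qed

lemma sums_qfalling_amplitude:
  assumes "\<bar>y\<bar> < 1"
  shows "(\<lambda>j. y^j * qfalling q j i * amplitude m x j / qpoch q q j) sums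
     (y^i * (amplitude_shift_numerator m x i y / qpoch_inf y q))"
proof -
  have "y^j * qfalling q j i * amplitude m x (i + (j - i)) = y^j * qfalling q j i * amplitude m x j" for j
    by (cases "i \<le> j") (simp_all add: qfalling_eq_0)
  with sums_qfalling_shift[OF sums_amplitude_shift[OF assms, of m x i], of i] show ?thesis
    by simp
qed

lemma sums_amplitude_square:
  assumes "\<bar>y\<bar> < 1"
  shows "(\<lambda>j. y^j * (amplitude m x j)^2 / qpoch q q j) sums (pgf_numerator m x y / qpoch_inf y q)"
proof -
  have "y^j * (amplitude m x j)^2 / qpoch q q j
      = (\<Sum>i\<le>m. amplitude_coeff m x i * (y^j * qfalling q j i * amplitude m x j / qpoch q q j))" for j
    by (simp add: power2_eq_square amplitude_def[of m x j] sum_distrib_left sum_distrib_right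
        sum_divide_distrib algebra_simps)
  moreover have "(\<lambda>j. \<Sum>i\<le>m. amplitude_coeff m x i * (y^j * qfalling q j i * amplitude m x j / qpoch q q j))
    sums (\<Sum>i\<le>m. amplitude_coeff m x i * (y^i * (amplitude_shift_numerator m x i y / qpoch_inf y q)))"
    by (intro sums_sum sums_mult sums_qfalling_amplitude[OF assms])
  ultimately show ?thesis unfolding pgf_numerator_def
    by (simp add: sum_distrib_left sum_distrib_right sum_divide_distrib algebra_simps)
qed

lemma sum_qbinom_qfalling:
  assumes "r \<le> m"
  shows "(\<Sum>i\<le>m. (-1)^i * q^(i choose 2) * z^i * qbinom q m i * q^(i*e) * qfalling q i r)
       = (-1)^r * q^(r choose 2) * z^r * q^(r*e) * qfalling q m r * qpoch (q^(r+e) * z) q (m-r)"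
proof -
  define c where "c = (-1)^r * q^(r choose 2) * z^r * q^(r*e) * qfalling q m r"
  have "(\<Sum>i\<le>m. (-1)^i * q^(i choose 2) * z^i * qbinom q m i * q^(i*e) * qfalling q i r)
      = (\<Sum>k\<le>m-r. (-1)^(r+k) * q^((r+k) choose 2) * z^(r+k) * qbinom q m (r+k) * q^((r+k)*e)
          * qfalling q (r+k) r)"
    by (rule sum_atMost_shift_zeros) (auto simp: qfalling_eq_0 assms)
  also have "\<dots> = (\<Sum>k\<le>m-r. c * (qbinom q (m-r) k * ((-1)^k * q^(k choose 2) * (q^(r+e) * z)^k)))"
  proof (rule sum.cong[OF refl])
    fix k
    have "qbinom q m (r+k) * qfalling q (r+k) r = qfalling q m r * qbinom q (m-r) k"
      using qbinom_mult_qfalling[of r "r+k" m] by simp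
    then show "(-1)^(r+k) * q^((r+k) choose 2) * z^(r+k) * qbinom q m (r+k) * q^((r+k)*e)
          * qfalling q (r+k) r
        = c * (qbinom q (m-r) k * ((-1)^k * q^(k choose 2) * (q^(r+e) * z)^k))"
      unfolding c_def
      by (simp add: choose2_add power_add power_mult_distrib add_mult_distrib algebra_simps
          flip: power_mult)
  qed
  also have "\<dots> = c * qpoch (q^(r+e) * z) q (m-r)"
    by (simp add: q_binomial[of "q^(r+e) * z" "m-r"] sum_distrib_left)
  finally show ?thesis unfolding c_def .
qed

lemma pgf_numerator_regroup:
  assumes "x \<noteq> 0"
  shows "pgf_numerator m x y = (\<Sum>r\<le>m. \<Sum>k\<le>m-r. amplitude_coeff m x (r+k) * qbinom q (r+k) r * y^k
           * ((-1)^r * q^(r choose 2) * (y/x)^r * qfalling q m r * qpoch (q^(r+k) * (y/x)) q (m-r)))"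
proof -
  define K where "K l r = (-1)^r * q^(r choose 2) * (y/x)^r * qfalling q m r
      * qpoch (q^l * (y/x)) q (m-r)" for l r
  define g where "g i l r = amplitude_coeff m x i * y^i * (amplitude_coeff m x l
      * (qbinom q l r * (q^(i*(l-r)) / q^(r*(l-r))) * qfalling q i r * y^(l-r)))" for i l r
  have "pgf_numerator m x y = (\<Sum>i\<le>m. \<Sum>l\<le>m. \<Sum>r\<le>l. g i l r)"
    unfolding pgf_numerator_def amplitude_shift_numerator_def g_def by (simp add: sum_distrib_left)
  also have "\<dots> = (\<Sum>l\<le>m. \<Sum>i\<le>m. \<Sum>r\<le>l. g i l r)" by (rule sum.swap)
  also have "\<dots> = (\<Sum>l\<le>m. \<Sum>r\<le>l. \<Sum>i\<le>m. g i l r)"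
    by (rule sum.cong[OF refl], rule sum.swap)
  also have "\<dots> = (\<Sum>l\<le>m. \<Sum>r\<le>l. amplitude_coeff m x l * qbinom q l r * y^(l-r) * K l r)"
  proof (intro sum.cong[OF refl])
    fix l r assume "l \<in> {..m}" "r \<in> {..l}"
    then have "r \<le> m" by simp
    have g: "g i l r = (amplitude_coeff m x l * qbinom q l r * y^(l-r) / q^(r*(l-r))) *
       ((-1)^i * q^(i choose 2) * (y/x)^i * qbinom q m i * q^(i*(l-r)) * qfalling q i r)" for i
      unfolding g_def amplitude_coeff_def using assms by (simp add: power_divide field_simps)
    have "(\<Sum>i\<le>m. g i l r) = (amplitude_coeff m x l * qbinom q l r * y^(l-r) / q^(r*(l-r)))
        * ((-1)^r * q^(r choose 2) * (y/x)^r * q^(r*(l-r)) * qfalling q m r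
          * qpoch (q^(r+(l-r)) * (y/x)) q (m-r))"
      unfolding g sum_distrib_left[symmetric] sum_qbinom_qfalling[OF \<open>r \<le> m\<close>] ..
    also have "\<dots> = amplitude_coeff m x l * qbinom q l r * y^(l-r) * K l r"
      unfolding K_def using \<open>r \<in> {..l}\<close> q_pos by (simp add: field_simps)
    finally show "(\<Sum>i\<le>m. g i l r) = amplitude_coeff m x l * qbinom q l r * y^(l-r) * K l r" .
  qed
  also have "\<dots> = (\<Sum>l\<le>m. \<Sum>r\<le>m. amplitude_coeff m x l * qbinom q l r * y^(l-r) * K l r)"
    by (intro sum.cong[OF refl] sum.mono_neutral_left) (auto simp: qbinom_eq_0)
  also have "\<dots> = (\<Sum>r\<le>m. \<Sum>l\<le>m. amplitude_coeff m x l * qbinom q l r * y^(l-r) * K l r)"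
    by (rule sum.swap)
  also have "\<dots> = (\<Sum>r\<le>m. \<Sum>k\<le>m-r.
      amplitude_coeff m x (r+k) * qbinom q (r+k) r * y^k * K (r+k) r)"
  proof (rule sum.cong[OF refl])
    fix r assume "r \<in> {..m}"
    then show "(\<Sum>l\<le>m. amplitude_coeff m x l * qbinom q l r * y^(l-r) * K l r)
      = (\<Sum>k\<le>m-r. amplitude_coeff m x (r+k) * qbinom q (r+k) r * y^k * K (r+k) r)"
      by (subst sum_atMost_shift_zeros) (auto simp: qbinom_eq_0)
  qed
  finally show ?thesis unfolding K_def .
qed

lemma pgf_numerator_summand_monomial:
  assumes "a \<noteq> 0" "m = r + k + s"
  shows "(a*q^m)^m * q^m * ((-1)^(r+k) * q^((r+k) choose 2) / (a*q^m)^(r+k)) * (t*a)^k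
       * ((-1)^r * q^(r choose 2) * (t*a/(a*q^m))^r) * ((-t)^s / q^(Suc s choose 2))
     = t^m * (-a)^(k+s) * q^(Suc (k+s) choose 2)"
proof -
  have exponent: "m + m * s + ((r+k) choose 2) + (r choose 2) = (Suc (k+s) choose 2) + m*r + (Suc s choose 2)"
    using choose2_double_add[of r] choose2_double_add[of s] unfolding assms(2)
    by (simp add: choose2_add choose2_Suc algebra_simps)
  have "(a*q^m)^m = (a*q^m)^(r+k) * (a*q^m)^s" "t^m = t^k * t^r * t^s"
    using assms(2) by (simp_all add: power_add)
  then have "(a*q^m)^m * q^m * ((-1)^(r+k) * q^((r+k) choose 2) / (a*q^m)^(r+k)) * (t*a)^k
       * ((-1)^r * q^(r choose 2) * (t*a/(a*q^m))^r) * ((-t)^s / q^(Suc s choose 2))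
      = ((-1)^(r+k) * (-1)^r) * (-1)^s * a^k * a^s * t^m *
        (q^m * q^(m * s) * q^((r+k) choose 2) * q^(r choose 2) / (q^(m*r) * q^(Suc s choose 2)))"
    using assms(1) q_pos
    by (simp add: power_mult_distrib power_minus[of t] power_divide field_simps flip: power_mult)
  also have "q^m * q^(m * s) * q^((r+k) choose 2) * q^(r choose 2)
      = q^(Suc (k+s) choose 2) * (q^(m*r) * q^(Suc s choose 2))"
    unfolding power_add[symmetric] exponent by (simp add: add.assoc)
  finally show ?thesis using q_pos by (simp add: power_add power_minus[of a] field_simps)
qed

lemma pgf_numerator_summand:
  assumes "a \<noteq> 0" "t \<noteq> 0" "r + k \<le> m" "x = a * q^m" "y = t * a"
  shows "x^m * q^m / qpoch q q m * (amplitude_coeff m x (r+k) * qbinom q (r+k) r * y^k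
           * ((-1)^r * q^(r choose 2) * (y/x)^r * qfalling q m r * qpoch (q^(r+k) * (y/x)) q (m-r)))
       = t^m * (-a)^(m-r) * q^(Suc (m-r) choose 2) * qbinom q m (m-r)
         * (qbinom q (m-r) k * (qpoch t q k * qpoch (q/t) q (m-r-k))) / qpoch q q (m-r)"
proof -
  obtain s where m: "m = r + k + s" using assms(3) le_Suc_ex by blast
  then have e: "m - r = k + s" "m - r - k = s" by auto
  have "q^(r+k) * (y/x) = t / q^s"
    unfolding assms(4,5) m using assms(1) q_pos by (simp add: power_add field_simps)
  then have poch: "qpoch (q^(r+k) * (y/x)) q (m-r)
      = (-t)^s / q^(Suc s choose 2) * qpoch (q/t) q s * qpoch t q k"
    using qpoch_add[of "t/q^s" q s k] qpoch_divide_power[OF assms(2), of s] q_pos e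
    by (simp add: add.commute)
  have qbinoms: "qbinom q m (r+k) * qbinom q (r+k) r * qfalling q m r
      = qbinom q m (k+s) * qbinom q (k+s) k * qpoch q q m / qpoch q q (k+s)"
  proof -
    have "qfalling q m r = qpoch q q m / qpoch q q (m - r)"
      using qfalling_mult_qpoch[of r m q] m qpoch_q_nonzero[of "m-r"] by (simp add: field_simps)
    then show ?thesis unfolding qbinom_def using m qpoch_q_nonzero e by (simp add: field_simps)
  qed
  have scalar: "x^m * q^m * ((-1)^(r+k) * q^((r+k) choose 2) / x^(r+k)) * y^k
       * ((-1)^r * q^(r choose 2) * (y/x)^r) * ((-t)^s / q^(Suc s choose 2))
     = t^m * (-a)^(k+s) * q^(Suc (k+s) choose 2)"
    unfolding assms(4,5) by (rule pgf_numerator_summand_monomial[OF assms(1) m])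
  have "x^m * q^m / qpoch q q m * (amplitude_coeff m x (r+k) * qbinom q (r+k) r * y^k
           * ((-1)^r * q^(r choose 2) * (y/x)^r * qfalling q m r * qpoch (q^(r+k) * (y/x)) q (m-r)))
      = (x^m * q^m * ((-1)^(r+k) * q^((r+k) choose 2) / x^(r+k)) * y^k
         * ((-1)^r * q^(r choose 2) * (y/x)^r) * ((-t)^s / q^(Suc s choose 2)))
        * (qbinom q m (r+k) * qbinom q (r+k) r * qfalling q m r) * (qpoch (q/t) q s * qpoch t q k)
        / qpoch q q m"
    unfolding amplitude_coeff_def poch by (simp add: field_simps)
  also have "\<dots> = t^m * (-a)^(k+s) * q^(Suc (k+s) choose 2) * qbinom q m (k+s) * qbinom q (k+s) k
        * (qpoch (q/t) q s * qpoch t q k) / qpoch q q (k+s)"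
    unfolding scalar qbinoms using qpoch_q_nonzero[of m] by (simp add: field_simps)
  finally show ?thesis unfolding e by (simp add: algebra_simps)
qed

lemma sum_qbinom_qpoch_qpoch:
  "(\<Sum>k\<le>M. qbinom q M k * (qpoch u q k * qpoch v q (M-k)))
   = (\<Sum>k\<le>M. qbinom q M k * (qpoch u q k * qpoch v q k * qpoch (u * v * q^k) q (M-k)))"
proof -
  have "(\<Sum>k\<le>M. qbinom q M k * (qpoch u q k * qpoch v q k * qpoch (u * v * q^k) q (M-k)))
      = (\<Sum>k\<le>M. \<Sum>j\<le>M-k. qbinom q M k * qbinom q (M-k) j
          * (u^j * qpoch u q k * qpoch v q (k+j) * qpoch u q (M-(k+j))))"
  proof (rule sum.cong[OF refl])
    fix k
    have "qpoch ((v * q^k) * u) q (M-k)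
        = (\<Sum>j\<le>M-k. qbinom q (M-k) j * (u^j * qpoch (v * q^k) q j * qpoch u q (M-k-j)))"
      by (rule q_vandermonde)
    then show "qbinom q M k * (qpoch u q k * qpoch v q k * qpoch (u * v * q^k) q (M-k))
      = (\<Sum>j\<le>M-k. qbinom q M k * qbinom q (M-k) j
          * (u^j * qpoch u q k * qpoch v q (k+j) * qpoch u q (M-(k+j))))"
      unfolding qpoch_add[of v q k] by (simp add: sum_distrib_left diff_diff_add algebra_simps)
  qed
  also have "\<dots> = (\<Sum>l\<le>M. \<Sum>k\<le>l. qbinom q M k * qbinom q (M-k) (l-k)
      * (u^(l-k) * qpoch u q k * qpoch v q (k+(l-k)) * qpoch u q (M-(k+(l-k)))))"
    by (rule sum_atMost_triangle)
  also have "\<dots> = (\<Sum>l\<le>M. qbinom q M l * qpoch v q l * qpoch u q (M-l)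
      * (\<Sum>k\<le>l. qbinom q l k * (u^(l-k) * qpoch u q k)))"
    unfolding sum_distrib_left
  proof (intro sum.cong[OF refl])
    fix l k assume "l \<in> {..M}" "k \<in> {..l}"
    then show "qbinom q M k * qbinom q (M-k) (l-k)
        * (u^(l-k) * qpoch u q k * qpoch v q (k+(l-k)) * qpoch u q (M-(k+(l-k))))
      = qbinom q M l * qpoch v q l * qpoch u q (M-l) * (qbinom q l k * (u^(l-k) * qpoch u q k))"
      using qbinom_mult_qbinom[of k l M] by simp
  qed
  also have "\<dots> = (\<Sum>l\<le>M. qbinom q M l * qpoch v q l * qpoch u q (M-l))"
    by (simp add: sum_qbinom_power_qpoch)
  also have "\<dots> = (\<Sum>k\<le>M. qbinom q M k * (qpoch u q k * qpoch v q (M-k)))"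
    by (subst sum_atMost_reflect) (auto intro!: sum.cong simp: qbinom_symmetric)
  finally show ?thesis ..
qed

lemma sum_qbinom_qpoch_reciprocal:
  assumes "t \<noteq> 0"
  shows "(\<Sum>k\<le>M. qbinom q M k * (qpoch t q k * qpoch (q/t) q (M-k)))
    = qpoch q q M * (\<Sum>k\<le>M. qbinom q M k * qpoch (q/t) q k * qpoch t q k / qpoch q q k)"
proof -
  have "qpoch (t * (q/t) * q^k) q (M-k) = qpoch q q M / qpoch q q k" if "k \<le> M" for k
  proof -
    have "qpoch q q (k + (M-k)) = qpoch q q k * qpoch (q * q^k) q (M-k)" by (rule qpoch_add)
    then show ?thesis using that assms qpoch_q_nonzero[of k] by (simp add: field_simps)
  qed
  then show ?thesis
    unfolding sum_qbinom_qpoch_qpoch sum_distrib_left by (intro sum.cong) auto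
qed

lemma terminating_3phi2_term:
  assumes "k \<le> M" "M \<le> m" "x = a * q^m"
  shows "qpoch (1/q^m) q k * qpoch (q/t) q k * qpoch t q k * (q*x)^k / (qpoch q q k)^2
      * (qbinom q (m-k) (M-k) * ((-1)^(M-k) * q^((M-k) choose 2) * (q^(k+1)*a)^(M-k)))
    = (-a)^M * q^(Suc M choose 2) * qbinom q m M
      * (qbinom q M k * qpoch (q/t) q k * qpoch t q k / qpoch q q k)"
proof -
  obtain s where M: "M = k + s" using assms(1) le_Suc_ex by blast
  have "q^(k choose 2) * q^k * q^(s choose 2) * q^((k+1) * s) = q^(Suc (k+s) choose 2)"
    by (simp add: choose2_add choose2_Suc algebra_simps flip: power_add)
  moreover have "qbinom q m k * qbinom q (m-k) (M-k) = qbinom q m M * qbinom q M k"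
    by (rule qbinom_mult_qbinom[OF assms(1,2)])
  moreover have "qpoch (1/q^m) q k * qpoch (q/t) q k * qpoch t q k * (q*x)^k / (qpoch q q k)^2
      * (qbinom q (m-k) (M-k) * ((-1)^(M-k) * q^((M-k) choose 2) * (q^(k+1)*a)^(M-k)))
    = ((-1)^k * (-1)^s * a^k * a^s * (q^(k choose 2) * q^k * q^(s choose 2) * q^((k+1) * s)))
      * (qbinom q m k * qbinom q (m-k) (M-k)) * (qpoch (q/t) q k * qpoch t q k / qpoch q q k)"
    unfolding qpoch_inverse_power qfalling_eq_qbinom assms(3) M using q_pos qpoch_q_nonzero[of k]
    by (simp add: power_mult_distrib power2_eq_square power_add field_simps flip: power_mult)
  ultimately show ?thesis by (simp add: M power_add power_minus[of a] algebra_simps)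
qed

lemma sum_terminating_3phi2:
  assumes "x = a * q^m"
  shows "(\<Sum>k\<le>m. qpoch (1/q^m) q k * qpoch (q/t) q k * qpoch t q k * (q*x)^k
                  * qpoch (q^(k+1)*a) q (m-k) / (qpoch q q k)^2)
   = (\<Sum>M\<le>m. (-a)^M * q^(Suc M choose 2) * qbinom q m M
        * (\<Sum>k\<le>M. qbinom q M k * qpoch (q/t) q k * qpoch t q k / qpoch q q k))"
proof -
  define c where "c k = qpoch (1/q^m) q k * qpoch (q/t) q k * qpoch t q k * (q*x)^k / (qpoch q q k)^2" for k
  have "(\<Sum>k\<le>m. qpoch (1/q^m) q k * qpoch (q/t) q k * qpoch t q k * (q*x)^k
                  * qpoch (q^(k+1)*a) q (m-k) / (qpoch q q k)^2)
      = (\<Sum>k\<le>m. \<Sum>s\<le>m-k. c k * (qbinom q (m-k) s * ((-1)^s * q^(s choose 2) * (q^(k+1)*a)^s)))"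
    unfolding c_def q_binomial[of "q^(k+1)*a" "m-k" for k, symmetric] sum_distrib_left[symmetric]
    by simp
  also have "\<dots> = (\<Sum>M\<le>m. \<Sum>k\<le>M. c k
      * (qbinom q (m-k) (M-k) * ((-1)^(M-k) * q^((M-k) choose 2) * (q^(k+1)*a)^(M-k))))"
    by (rule sum_atMost_triangle)
  also have "\<dots> = (\<Sum>M\<le>m. \<Sum>k\<le>M. (-a)^M * q^(Suc M choose 2) * qbinom q m M
      * (qbinom q M k * qpoch (q/t) q k * qpoch t q k / qpoch q q k))"
    unfolding c_def by (intro sum.cong refl terminating_3phi2_term[OF _ _ assms]) auto
  finally show ?thesis by (simp add: sum_distrib_left)
qed

lemma pgf_numerator_eq:
  assumes "a \<noteq> 0" "t \<noteq> 0" "x = a * q^m" "y = t * a"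
  shows "x^m * q^m / qpoch q q m * pgf_numerator m x y
    = t^m * (\<Sum>k\<le>m. qpoch (1/q^m) q k * qpoch (q/t) q k * qpoch t q k * (q*x)^k
                       * qpoch (q^(k+1)*a) q (m-k) / (qpoch q q k)^2)"
proof -
  define f where "f M = (-a)^M * q^(Suc M choose 2) * qbinom q m M" for M
  define g where "g M = (\<Sum>k\<le>M. qbinom q M k * (qpoch t q k * qpoch (q/t) q (M-k)))" for M
  define h where "h M = (\<Sum>k\<le>M. qbinom q M k * qpoch (q/t) q k * qpoch t q k / qpoch q q k)" for M
  have "x \<noteq> 0" using assms(1,3) q_pos by simp
  then have "x^m * q^m / qpoch q q m * pgf_numerator m x y
     = (\<Sum>r\<le>m. \<Sum>k\<le>m-r. t^m * (-a)^(m-r) * q^(Suc (m-r) choose 2) * qbinom q m (m-r)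
          * (qbinom q (m-r) k * (qpoch t q k * qpoch (q/t) q (m-r-k))) / qpoch q q (m-r))"
    unfolding pgf_numerator_regroup[OF \<open>x \<noteq> 0\<close>] sum_distrib_left
    by (intro sum.cong refl pgf_numerator_summand[OF assms(1,2) _ assms(3,4)]) auto
  also have "\<dots> = (\<Sum>r\<le>m. t^m * f (m-r) * g (m-r) / qpoch q q (m-r))"
    by (simp add: f_def g_def sum_distrib_left sum_divide_distrib algebra_simps)
  also have "\<dots> = (\<Sum>M\<le>m. t^m * f M * g M / qpoch q q M)"
    by (rule sum_atMost_reflect[symmetric])
  also have "\<dots> = (\<Sum>M\<le>m. t^m * (f M * h M))"
    unfolding g_def h_def sum_qbinom_qpoch_reciprocal[OF assms(2)]
    using qpoch_q_nonzero by (intro sum.cong refl) simp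
  also have "\<dots> = t^m * (\<Sum>M\<le>m. f M * h M)"
    by (rule sum_distrib_left[symmetric])
  also have "\<dots> = t^m * (\<Sum>k\<le>m. qpoch (1/q^m) q k * qpoch (q/t) q k * qpoch t q k * (q*x)^k
                       * qpoch (q^(k+1)*a) q (m-k) / (qpoch q q k)^2)"
    unfolding sum_terminating_3phi2[OF assms(3)] f_def h_def ..
  finally show ?thesis .
qed

lemma sums_gen_euler_pgf:
  assumes "0 < lam" "(1-q) * lam < q^m" "\<bar>t\<bar> \<le> 1" "t \<noteq> 0"
  defines "x \<equiv> (1-q) * lam" and "a \<equiv> (1-q) * lam / q^m"
  shows "(\<lambda>j. t^j * gen_euler_p lam q m j) sums
    (t^m * qpoch_inf a q / qpoch_inf (t*a) q * (\<Sum>k\<le>m. qpoch (1/q^m) q k * qpoch (q/t) q k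
       * qpoch t q k / (qpoch (q*a) q k * qpoch q q k) * (q*x)^k / qpoch q q k))"
proof -
  define y where "y = t * a"
  have a: "0 < a" "a < 1" "a \<noteq> 0" "x = a * q^m"
    using assms(1,2) q_pos q_less_1 by (simp_all add: a_def x_def)
  have "\<bar>y\<bar> \<le> a" using assms(3) a unfolding y_def by (simp add: abs_mult mult_left_le_one_le)
  then have y: "\<bar>y\<bar> < 1" using a by simp
  have "q * a < 1 * 1" using a q_pos q_less_1 by (intro mult_strict_mono) auto
  then have "\<bar>q * a\<bar> < 1" using a q_pos by simp
  then have "qpoch (q*a) q k > 0" for k
    using q_pos q_less_1 by (intro qpoch_pos) auto
  then have qa_nonzero: "qpoch (q*a) q k \<noteq> 0" for k
    by (metis less_irrefl)
  have x: "x = (1-q) * lam" "x \<noteq> 0" using a q_pos by (simp_all add: x_def)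
  define C where "C = x^m / (gen_euler_N q m lam * qpoch q q m)"
  have "t^j * gen_euler_p lam q m j = C * (y^j * (amplitude m x j)^2 / qpoch q q j)" for j
    using gen_euler_p_eq_amplitude[OF x, of t j] a(4) q_pos
    unfolding C_def y_def by simp
  then have "(\<lambda>j. t^j * gen_euler_p lam q m j) sums (C * (pgf_numerator m x y / qpoch_inf y q))"
    using sums_mult[OF sums_amplitude_square[OF y]] by simp
  also have "C * (pgf_numerator m x y / qpoch_inf y q)
      = qpoch_inf a q / (qpoch (q*a) q m * qpoch_inf y q) * (x^m * q^m / qpoch q q m * pgf_numerator m x y)"
    using qpoch_inf_nonzero[of a] a qa_nonzero[of m] qpoch_q_nonzero[of m] q_pos
    unfolding C_def gen_euler_N_def by (simp add: a_def field_simps)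
  also have "\<dots> = t^m * qpoch_inf a q / qpoch_inf y q * (\<Sum>k\<le>m. qpoch (1/q^m) q k * qpoch (q/t) q k
       * qpoch t q k / (qpoch (q*a) q k * qpoch q q k) * (q*x)^k / qpoch q q k)"
  proof -
    have split: "qpoch (q^(k+1) * a) q (m-k) = qpoch (q*a) q m / qpoch (q*a) q k" if "k \<le> m" for k
      using qpoch_add[of "q*a" q k "m-k"] that qa_nonzero[of k] by (simp add: field_simps)
    show ?thesis
      unfolding pgf_numerator_eq[OF a(3) assms(4) a(4) y_def] sum_distrib_left
      using a qa_nonzero qpoch_q_nonzero
      by (intro sum.cong refl) (simp only: atMost_iff split, simp add: field_simps power2_eq_square)
  qed
  finally show ?thesis unfolding y_def .
qed

end

lemma basic_hyper_terminating:
  assumes "0 < q" "q < 1"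
  shows "basic_hyper [1/q^m, q/t, t] [b, q] q \<xi>
    = (\<Sum>k\<le>m. qpoch (1/q^m) q k * qpoch (q/t) q k * qpoch t q k / (qpoch b q k * qpoch q q k)
         * \<xi>^k / qpoch q q k)"
proof -
  have "qpoch (1/q^m) q k = 0" if "k > m" for k
    using that unfolding qpoch_inverse_power[OF assms] by (simp add: qfalling_eq_0)
  then show ?thesis unfolding basic_hyper_def
    by (subst suminf_finite[of "{..m}"]) (auto simp: mult.assoc)
qed

theorem proposition4p1:
  fixes q lam t :: real and m :: nat
  assumes "0 < q" "q < 1"
    and "0 < lam" "lam < q ^ m / (1 - q)"
    and "\<bar>t\<bar> \<le> 1" "t \<noteq> 0"
  shows "(\<lambda>j. t ^ j * gen_euler_p lam q m j) sums
     (t ^ m * qpoch_inf ((1 - q) * lam / q ^ m) q / qpoch_inf (t * lam * (1 - q) / q ^ m) q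
      * basic_hyper [1 / q ^ m, q / t, t] [q * (1 - q) * lam / q ^ m, q] q (q * lam * (1 - q)))"
proof -
  have "(1 - q) * lam < q^m" using assms(2,4) by (simp add: field_simps)
  from sums_gen_euler_pgf[OF assms(1,2,3) this assms(5,6)] show ?thesis
    unfolding basic_hyper_terminating[OF assms(1,2)] by (simp add: algebra_simps)
qed

end
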